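(* Let $m\ge1$, $\zeta\in\mathcal S_m$, and $\omega_0=(m,m-1,\dots,1)$ the longest element of $\mathcal S_m$. Then the map $$((\alpha_n,\beta_n),\dots,(\alpha_1,\beta_1))\longmapsto((\omega_0(\beta_n),\omega_0(\alpha_n)),\dots,(\omega_0(\beta_1),\omega_0(\alpha_1)))$$ is a bijection from $R_u(\zeta)$ to $R_u(\omega_0\zeta\omega_0)$.
   Context: $\mathcal S_\infty$ is the group of permutations of $\{1,2,\dots\}$ fixing all but finitely many points, with $\mathcal S_m\subset\mathcal S_\infty$; composition $(uv)(i)=u(v(i))$; $1$ the identity; $\ell$ the number of inversions. For $k\ge1$, $\le_k$ is the reflexive–transitive closure of covers $u\lessdot_k u(a\,b)$ with $a\le k<b$ and $\ell(u(a\,b))=\ell(u)+1$. For $\zeta\in\mathcal S_\infty$, $\ell_u(\zeta):=\ell(\zeta u)-\ell(u)$ for any $u,k$ with $u\le_k\zeta u$ (these exist and the value is independent of the choice). For $0<\alpha<\beta$, $\hat u_{\alpha\beta}$ is the linear operator on $\mathbb Q\mathcal S_\infty$ with $\hat u_{\alpha\beta}(\zeta)=(\alpha\,\beta)\zeta$ if $\ell_u((\alpha\,\beta)\zeta)=\ell_u(\zeta)+1$ and $0$ otherwise. $R_u(\zeta)$ is the set of sequences $((\alpha_n,\beta_n),\dots,(\alpha_1,\beta_1))$, $n\ge0$, with $0<\alpha_i<\beta_i$ and $\hat u_{\alpha_n\beta_n}\cdots\hat u_{\alpha_1\beta_1}(1)=\zeta$. *)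

theory Defs
  imports Complex_Main "HOL-Combinatorics.Transposition"
begin

text \<open>Permutations of the positive integers fixing all but finitely many points,
  represented as functions nat \<Rightarrow> nat that fix 0.  Composition (u v)(i) = u (v i) is u \<circ> v.\<close>

definition S_inf :: "(nat \<Rightarrow> nat) set" where
  "S_inf = {w. bij w \<and> w 0 = 0 \<and> finite {i. w i \<noteq> i}}"

definition S_m :: "nat \<Rightarrow> (nat \<Rightarrow> nat) set" where
  "S_m m = {w \<in> S_inf. \<forall>i. m < i \<longrightarrow> w i = i}"

definition len :: "(nat \<Rightarrow> nat) \<Rightarrow> nat" where
  "len w = card {(i, j). 1 \<le> i \<and> i < j \<and> w j < w i}"

definition kcover :: "nat \<Rightarrow> (nat \<Rightarrow> nat) \<Rightarrow> (nat \<Rightarrow> nat) \<Rightarrow> bool" where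
  "kcover k u v \<longleftrightarrow> u \<in> S_inf \<and> (\<exists>a b. 1 \<le> a \<and> a \<le> k \<and> k < b \<and>
      v = u \<circ> transpose a b \<and> len v = len u + 1)"

definition kbruhat :: "nat \<Rightarrow> (nat \<Rightarrow> nat) \<Rightarrow> (nat \<Rightarrow> nat) \<Rightarrow> bool" where
  "kbruhat k = (kcover k)\<^sup>*\<^sup>*"

definition ell_u :: "(nat \<Rightarrow> nat) \<Rightarrow> int" where
  "ell_u \<zeta> = (SOME n. \<exists>u k. 1 \<le> k \<and> u \<in> S_inf \<and> kbruhat k u (\<zeta> \<circ> u) \<and>
                          n = int (len (\<zeta> \<circ> u)) - int (len u))"

text \<open>Elements of the group algebra Q S_inf, as coefficient functions
  (only finitely supported ones arise).  Basis element of w:\<close>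
definition basis :: "(nat \<Rightarrow> nat) \<Rightarrow> ((nat \<Rightarrow> nat) \<Rightarrow> rat)" where
  "basis w = (\<lambda>v. if v = w then 1 else 0)"

text \<open>The linear operator \<^emph>\<open>u-hat\<close>_{\<alpha>\<beta>}: sends \<zeta> to (\<alpha> \<beta>)\<zeta> if
  \<ell>_u((\<alpha> \<beta>)\<zeta>) = \<ell>_u(\<zeta>)+1, else 0; extended linearly.\<close>
definition uhat :: "nat \<Rightarrow> nat \<Rightarrow> ((nat \<Rightarrow> nat) \<Rightarrow> rat) \<Rightarrow> ((nat \<Rightarrow> nat) \<Rightarrow> rat)" where
  "uhat \<alpha> \<beta> f = (\<lambda>w. if w \<in> S_inf \<and> ell_u w = ell_u (transpose \<alpha> \<beta> \<circ> w) + 1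
                      then f (transpose \<alpha> \<beta> \<circ> w) else 0)"

definition R_u :: "(nat \<Rightarrow> nat) \<Rightarrow> (nat \<times> nat) list set" where
  "R_u \<zeta> = {xs. (\<forall>(a, b) \<in> set xs. 0 < a \<and> a < b) \<and>
                 foldr (\<lambda>(a, b) f. uhat a b f) xs (basis id) = basis \<zeta>}"

definition w0 :: "nat \<Rightarrow> nat \<Rightarrow> nat" where
  "w0 m = (\<lambda>i. if 1 \<le> i \<and> i \<le> m then m + 1 - i else i)"

end

theory Submission
  imports Defs
begin

text \<open>
  By the criterion of Bergeron and Sottile, \<open>u \<le>\<^sub>k \<zeta> u\<close> means that the values at the positions
  \<open>\<le> k\<close> only go up, those at the positions \<open>> k\<close> only go down, and increasing pairs on one side
  of \<open>k\<close> stay increasing. Comparing the inversions of \<open>\<zeta> u\<close> and \<open>u\<close> under this criterion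
  shows that \<open>\<ell>\<^sub>u(\<zeta>)\<close> is the sum, over the inversions \<open>x < y\<close> of \<open>\<zeta>\<close>, of
  \<open>- sgn(\<zeta> x - x) sgn(\<zeta> y - y)\<close>; in particular it depends on \<open>\<zeta>\<close> alone. Conjugation by
  \<open>\<omega>\<^sub>0\<close> reverses positions and values inside \<open>{1..m}\<close>, so it preserves this sum, while for
  \<open>\<zeta> \<in> S\<^sub>m\<close> and \<open>b > m\<close> the sum strictly increases from \<open>\<zeta>\<close> to \<open>(a b) \<zeta>\<close>. Hence a chain of
  operators \<open>uhat \<alpha> \<beta>\<close> reaching \<open>\<zeta> \<in> S\<^sub>m\<close> stays inside \<open>S\<^sub>m\<close>, and conjugating it step by step
  by \<open>\<omega>\<^sub>0\<close>, using \<open>\<omega>\<^sub>0 (\<alpha> \<beta>) \<omega>\<^sub>0 = (\<omega>\<^sub>0 \<beta> \<omega>\<^sub>0 \<alpha>)\<close>, yields a chain reaching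
  \<open>\<omega>\<^sub>0 \<zeta> \<omega>\<^sub>0\<close>. The map on chains is an involution.
\<close>


section \<open>Finitary permutations, inversions and \<open>k\<close>-covers\<close>

lemma S_infD:
  assumes "w \<in> S_inf"
  shows "bij w" "w 0 = 0" "finite {i. w i \<noteq> i}"
  using assms unfolding S_inf_def by auto

lemma S_inf_inj_iff: "w \<in> S_inf \<Longrightarrow> w x = w y \<longleftrightarrow> x = y"
  using S_infD(1) by (metis bij_def injD)

lemma S_inf_inv_cancel:
  assumes "w \<in> S_inf"
  shows "w (inv w x) = x" "inv w (w x) = x"
  using S_infD(1)[OF assms] by (auto simp: bij_is_surj surj_f_inv_f bij_is_inj inv_f_f)

lemma S_inf_fixes_above:
  assumes "w \<in> S_inf"
  obtains N where "M \<le> N" "\<forall>x>N. w x = x"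
proof -
  obtain N where "\<forall>x\<in>{i. w i \<noteq> i}. x \<le> N"
    using S_infD(3)[OF assms] finite_nat_set_iff_bounded_le by blast
  then show ?thesis
    using that[of "max N M"] by force
qed

lemma S_inf_comp:
  assumes "u \<in> S_inf" "v \<in> S_inf"
  shows "u \<circ> v \<in> S_inf"
proof -
  have "{i. (u \<circ> v) i \<noteq> i} \<subseteq> {i. v i \<noteq> i} \<union> {i. u i \<noteq> i}" by auto
  then show ?thesis
    using assms unfolding S_inf_def by (auto intro: bij_comp finite_subset)
qed

lemma S_inf_transpose:
  assumes "0 < a" "0 < b"
  shows "transpose a b \<in> S_inf"
proof -
  have "{i. transpose a b i \<noteq> i} \<subseteq> {a, b}" by (auto simp: transpose_def)
  then show ?thesis
    using assms unfolding S_inf_def by (auto intro: finite_subset simp: bij_transpose transpose_def)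
qed

lemma S_inf_inv:
  assumes "w \<in> S_inf"
  shows "inv w \<in> S_inf"
proof -
  have "{i. inv w i \<noteq> i} \<subseteq> w ` {i. w i \<noteq> i}"
    using S_inf_inv_cancel[OF assms] by (metis (mono_tags, lifting) image_eqI mem_Collect_eq subsetI)
  moreover have "inv w 0 = 0"
    using S_infD(2)[OF assms] S_inf_inv_cancel(2)[OF assms] by metis
  ultimately show ?thesis
    using S_infD[OF assms] unfolding S_inf_def by (auto intro: finite_subset bij_imp_bij_inv)
qed

lemma S_inf_pos: "w \<in> S_inf \<Longrightarrow> 0 < x \<Longrightarrow> 0 < w x"
  using S_infD(2)[of w] S_inf_inj_iff[of w x 0] by (auto simp: gr0_conv_Suc)

lemma S_inf_le_bound:
  assumes "w \<in> S_inf" "\<forall>x>N. w x = x" "x \<le> N"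
  shows "w x \<le> N"
proof (rule ccontr)
  assume "\<not> w x \<le> N"
  then have "w (w x) = w x" using assms(2) by simp
  then show False using \<open>\<not> w x \<le> N\<close> assms(3) S_inf_inj_iff[OF assms(1)] by auto
qed

lemma S_inf_bij_betw_atLeastAtMost:
  assumes "w \<in> S_inf" "\<forall>x>N. w x = x"
  shows "bij_betw w {1..N} {1..N}"
proof -
  have inj: "inj_on w {1..N}"
    using S_inf_inj_iff[OF assms(1)] by (auto intro: inj_onI)
  have "w ` {1..N} \<subseteq> {1..N}"
    using S_inf_le_bound[OF assms] S_inf_pos[OF assms(1)] by (auto simp: Suc_le_eq)
  then show ?thesis
    using inj by (simp add: bij_betw_def endo_inj_surj)
qed

lemma len_eq_sum:
  assumes "w \<in> S_inf" "\<forall>x>N. w x = x"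
  shows "int (len w) = (\<Sum>i\<in>{1..N}. \<Sum>j\<in>{1..N}. if i < j \<and> w j < w i then 1 else 0)"
proof -
  let ?P = "\<lambda>(i, j). i < j \<and> w j < w i"
  have bound: "i < N \<and> j \<le> N" if "i < j" "w j < w i" for i j
  proof (rule ccontr)
    assume "\<not> (i < N \<and> j \<le> N)"
    then have "\<not> j \<le> N" using that by linarith
    then have "w j = j" "i \<le> N \<Longrightarrow> w i \<le> N" "\<not> i \<le> N \<Longrightarrow> w i = i"
      using assms(2) S_inf_le_bound[OF assms] by auto
    then show False using that \<open>\<not> j \<le> N\<close> by (cases "i \<le> N") auto
  qed
  have "{(i, j). 1 \<le> i \<and> i < j \<and> w j < w i} = Set.filter ?P ({1..N} \<times> {1..N})"
    by (auto dest: bound)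
  then have "int (len w) = (\<Sum>p\<in>Set.filter ?P ({1..N} \<times> {1..N}). 1)"
    unfolding len_def by simp
  also have "\<dots> = (\<Sum>p\<in>{1..N} \<times> {1..N}. if ?P p then 1 else 0)"
    by (subst sum.inter_filter[symmetric]) auto
  finally show ?thesis
    by (simp add: sum.cartesian_product case_prod_beta)
qed

lemma sum_sum_split_two:
  fixes g :: "'a \<Rightarrow> 'a \<Rightarrow> 'b :: comm_monoid_add"
  assumes "finite A" "a \<in> A" "b \<in> A" "a \<noteq> b"
  shows "(\<Sum>x\<in>A. \<Sum>y\<in>A. g x y) = (\<Sum>x\<in>A-{a,b}. \<Sum>y\<in>A-{a,b}. g x y)
     + (\<Sum>c\<in>A-{a,b}. g a c + g c a + g b c + g c b) + g a a + g a b + g b a + g b b"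
proof -
  define S where "S = A - {a, b}"
  have A: "A = insert a (insert b S)" "a \<notin> S" "b \<notin> S" "finite S"
    using assms unfolding S_def by auto
  show ?thesis
    unfolding S_def[symmetric] by (subst A(1))+ (use A(2-4) assms(4) in \<open>simp add: sum.distrib ac_simps\<close>)
qed

lemma len_comp_transpose:
  assumes u: "u \<in> S_inf" and ab: "0 < a" "a < b"
  shows "int (len (u \<circ> transpose a b)) = int (len u) + (if u a < u b then 1 else -1)
     + 2 * int (card {c. a < c \<and> c < b \<and> u a < u c \<and> u c < u b})
     - 2 * int (card {c. a < c \<and> c < b \<and> u b < u c \<and> u c < u a})"
proof -
  obtain N where N: "b \<le> N" "\<forall>x>N. u x = x" using S_inf_fixes_above[OF u] .
  define v where "v = u \<circ> transpose a b"
  have v: "v \<in> S_inf" unfolding v_def using ab by (intro S_inf_comp u S_inf_transpose) auto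
  have vN: "\<forall>x>N. v x = x" using N ab unfolding v_def by (auto simp: transpose_def)
  have uab: "u a \<noteq> u b" using S_inf_inj_iff[OF u] ab by simp
  define f where "f w i j = (if i < j \<and> w j < w i then 1 else (0::int))" for w :: "nat \<Rightarrow> nat" and i j
  define S where "S = {1..N} - {a, b}"
  define C1 where "C1 = {c. a < c \<and> c < b \<and> u a < u c \<and> u c < u b}"
  define C2 where "C2 = {c. a < c \<and> c < b \<and> u b < u c \<and> u c < u a}"
  have A: "finite {1..N}" "a \<in> {1..N}" "b \<in> {1..N}" "a \<noteq> b" using ab N by auto
  have C: "C1 \<subseteq> S" "C2 \<subseteq> S" "finite S" unfolding C1_def C2_def S_def using ab N by auto
  have inner: "(\<Sum>x\<in>S. \<Sum>y\<in>S. f v x y) = (\<Sum>x\<in>S. \<Sum>y\<in>S. f u x y)"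
    unfolding S_def f_def v_def by (intro sum.cong refl) (auto simp: transpose_def)
  have "f v a c + f v c a + f v b c + f v c b = f u a c + f u c a + f u b c + f u c b
       + 2 * of_bool (c \<in> C1) - 2 * of_bool (c \<in> C2)" if "c \<in> S" for c
  proof -
    have "c \<noteq> a" "c \<noteq> b" "v c = u c" "v a = u b" "v b = u a" "u c \<noteq> u a" "u c \<noteq> u b"
      using that S_inf_inj_iff[OF u] unfolding S_def v_def by (auto simp: transpose_def)
    then show ?thesis unfolding f_def C1_def C2_def using ab uab by auto
  qed
  then have "(\<Sum>c\<in>S. f v a c + f v c a + f v b c + f v c b)
      = (\<Sum>c\<in>S. f u a c + f u c a + f u b c + f u c b) + 2 * int (card C1) - 2 * int (card C2)"
    using C by (simp add: sum.distrib sum_subtractf sum_distrib_left[symmetric] sum.If_cases Int_absorb1)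
  moreover have "f v a a + f v a b + f v b a + f v b b
      = f u a a + f u a b + f u b a + f u b b + (if u a < u b then 1 else -1)"
    unfolding f_def v_def using ab uab by (auto simp: transpose_def)
  ultimately show ?thesis
    using len_eq_sum[OF u N(2)] len_eq_sum[OF v vN]
    unfolding v_def[symmetric] C1_def[symmetric] C2_def[symmetric] f_def[symmetric]
      sum_sum_split_two[OF A, of "f v"] sum_sum_split_two[OF A, of "f u"] S_def[symmetric] inner
    by simp
qed

lemma len_comp_transpose_eq_Suc_iff:
  assumes u: "u \<in> S_inf" and ab: "0 < a" "a < b"
  shows "len (u \<circ> transpose a b) = Suc (len u) \<longleftrightarrow>
    u a < u b \<and> (\<forall>c. a < c \<and> c < b \<longrightarrow> \<not> (u a < u c \<and> u c < u b))"
proof -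
  define C1 where "C1 = {c. a < c \<and> c < b \<and> u a < u c \<and> u c < u b}"
  define C2 where "C2 = {c. a < c \<and> c < b \<and> u b < u c \<and> u c < u a}"
  have "finite C1" unfolding C1_def by (rule finite_subset[of _ "{..b}"]) auto
  have len: "int (len (u \<circ> transpose a b)) = int (len u) + (if u a < u b then 1 else -1)
      + 2 * int (card C1) - 2 * int (card C2)"
    unfolding C1_def C2_def by (rule len_comp_transpose[OF assms])
  show ?thesis
  proof (cases "u a < u b")
    case True
    then have "C2 = {}" unfolding C2_def by auto
    then have "len (u \<circ> transpose a b) = Suc (len u) \<longleftrightarrow> C1 = {}"
      using len True \<open>finite C1\<close> by auto
    then show ?thesis
      using True unfolding C1_def by auto
  next
    case False
    then have "C1 = {}" unfolding C1_def by auto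
    then show ?thesis
      using len False by auto
  qed
qed

lemma kcover_iff:
  "kcover k u v \<longleftrightarrow> u \<in> S_inf \<and> (\<exists>a b. 0 < a \<and> a \<le> k \<and> k < b \<and> v = u \<circ> transpose a b \<and>
     u a < u b \<and> (\<forall>c. a < c \<and> c < b \<longrightarrow> \<not> (u a < u c \<and> u c < u b)))"
    (is "_ \<longleftrightarrow> _ \<and> (\<exists>a b. ?swap a b)")
proof
  assume "kcover k u v"
  then obtain a b where "u \<in> S_inf" "1 \<le> a" "a \<le> k" "k < b" "v = u \<circ> transpose a b"
    "len v = len u + 1"
    unfolding kcover_def by blast
  then have "?swap a b"
    using len_comp_transpose_eq_Suc_iff[of u a b] by simp
  then show "u \<in> S_inf \<and> (\<exists>a b. ?swap a b)"
    using \<open>u \<in> S_inf\<close> by blast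
next
  assume "u \<in> S_inf \<and> (\<exists>a b. ?swap a b)"
  then obtain a b where "u \<in> S_inf" "?swap a b" by blast
  then show "kcover k u v"
    unfolding kcover_def using len_comp_transpose_eq_Suc_iff[of u a b]
    by (intro conjI exI[of _ a] exI[of _ b]) auto
qed

section \<open>The \<open>k\<close>-Bruhat order\<close>

text \<open>The criterion of Bergeron and Sottile for \<open>u \<le>\<^sub>k w\<close>.\<close>

definition kbruhat_crit :: "nat \<Rightarrow> (nat \<Rightarrow> nat) \<Rightarrow> (nat \<Rightarrow> nat) \<Rightarrow> bool" where
  "kbruhat_crit k u w \<longleftrightarrow> w \<in> S_inf \<and>
     (\<forall>i. 0 < i \<and> i \<le> k \<longrightarrow> u i \<le> w i) \<and> (\<forall>i. k < i \<longrightarrow> w i \<le> u i) \<and>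
     (\<forall>i j. 0 < i \<and> i < j \<and> (j \<le> k \<or> k < i) \<and> u i < u j \<longrightarrow> w i < w j)"

lemma kcover_S_inf: "kcover k u v \<Longrightarrow> v \<in> S_inf"
  unfolding kcover_iff by (auto intro!: S_inf_comp S_inf_transpose)

lemma kbruhat_critD:
  assumes "kbruhat_crit k u w"
  shows "w \<in> S_inf" "0 < i \<Longrightarrow> i \<le> k \<Longrightarrow> u i \<le> w i" "k < i \<Longrightarrow> w i \<le> u i"
    "0 < i \<Longrightarrow> i < j \<Longrightarrow> j \<le> k \<or> k < i \<Longrightarrow> u i < u j \<Longrightarrow> w i < w j"
  using assms unfolding kbruhat_crit_def by blast+

lemma kbruhat_crit_refl: "u \<in> S_inf \<Longrightarrow> kbruhat_crit k u u"
  unfolding kbruhat_crit_def by auto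

lemma kbruhat_crit_kcover:
  assumes crit: "kbruhat_crit k u w" and cover: "kcover k w w'"
  shows "kbruhat_crit k u w'"
proof -
  obtain a b where w: "w \<in> S_inf" and ab: "0 < a" "a \<le> k" "k < b" "w' = w \<circ> transpose a b"
    and up: "w a < w b" and gap: "\<forall>c. a < c \<and> c < b \<longrightarrow> \<not> (w a < w c \<and> w c < w b)"
    using cover unfolding kcover_iff by blast
  have w'a: "w' a = w b" and w'b: "w' b = w a" and w'c: "\<And>c. c \<noteq> a \<Longrightarrow> c \<noteq> b \<Longrightarrow> w' c = w c"
    using ab(4) by (auto simp: transpose_def)
  have inj: "\<And>x y. w x = w y \<longleftrightarrow> x = y" using S_inf_inj_iff[OF w] .
  note crit = kbruhat_critD[OF crit]
  have "w' \<in> S_inf" using ab w by (auto intro!: S_inf_comp S_inf_transpose)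
  moreover have "u i \<le> w' i" if "0 < i" "i \<le> k" for i
    using crit(2)[OF that] that ab up w'a w'c[of i] by (cases "i = a") auto
  moreover have "w' i \<le> u i" if "k < i" for i
    using crit(3)[OF that] that ab up w'b w'c[of i] by (cases "i = b") auto
  moreover have "w' i < w' j" if ij: "0 < i" "i < j" "j \<le> k \<or> k < i" "u i < u j" for i j
  proof -
    have old: "w i < w j" by (rule crit(4)[OF ij])
    consider "i = a" | "j = a" | "i = b" | "j = b" | "{i, j} \<inter> {a, b} = {}" by auto
    then show ?thesis
    proof cases
      case 1
      then have "a < j" "j < b" "w j \<noteq> w b" using ij ab inj by auto
      then show ?thesis using 1 old gap w'a w'c[of j] by fastforce
    next
      case 2
      then show ?thesis using ij ab old up w'a w'c[of i] by auto
    next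
      case 3
      then show ?thesis using ij ab old up w'b w'c[of j] by auto
    next
      case 4
      then have "a < i" "i < b" "w i \<noteq> w a" using ij ab inj by auto
      then show ?thesis using 4 old gap w'b w'c[of i] by fastforce
    qed (use old w'c in auto)
  qed
  ultimately show ?thesis unfolding kbruhat_crit_def by blast
qed

lemma kbruhat_imp_crit:
  assumes "u \<in> S_inf" "kbruhat k u w"
  shows "kbruhat_crit k u w"
  using assms(2) unfolding kbruhat_def
  by (induction rule: rtranclp_induct) (auto intro: kbruhat_crit_refl[OF assms(1)] kbruhat_crit_kcover)

lemma kbruhat_crit_exists_raised:
  assumes u: "u \<in> S_inf" and crit: "kbruhat_crit k u w" and ne: "u \<noteq> w"
  shows "\<exists>a. 0 < a \<and> a \<le> k \<and> u a < w a"
proof (rule ccontr)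
  assume "\<not> ?thesis"
  then have le: "w i \<le> u i" for i
    using kbruhat_critD(2,3)[OF crit, of i] S_infD(2)[OF u] S_infD(2)[OF kbruhat_critD(1)[OF crit]]
    by (cases "i = 0"; cases "i \<le> k") auto
  obtain i0 where "u i0 \<noteq> w i0" using ne by (auto simp: fun_eq_iff)
  with le[of i0] have "w i0 < u i0" by simp
  then obtain i where i: "w i < u i" and least: "\<And>i'. w i' < u i' \<Longrightarrow> u i \<le> u i'"
    using ex_has_least_nat[of "\<lambda>i. w i < u i" i0 u] by blast
  define j where "j = inv u (w i)"
  have uj: "u j = w i" unfolding j_def using S_inf_inv_cancel[OF u] by simp
  then have "w j \<noteq> w i"
    using i S_inf_inj_iff[OF kbruhat_critD(1)[OF crit]] by fastforce
  then have "w j < u j" using le[of j] uj by simp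
  then show False using least[of j] uj i by simp
qed

lemma kbruhat_crit_exists_partner:
  assumes u: "u \<in> S_inf" and crit: "kbruhat_crit k u w" and a: "0 < a" "a \<le> k" "u a < w a"
    and top: "\<And>i. 0 < i \<Longrightarrow> i \<le> k \<Longrightarrow> u a < u i \<Longrightarrow> w i = u i"
  shows "\<exists>b>k. u a < u b \<and> u b \<le> w a \<and> w b \<le> u a"
proof (rule ccontr)
  assume none: "\<not> ?thesis"
  \<comment> \<open>then \<open>w \<circ> inv u\<close> maps \<open>{u a <.. w a}\<close> injectively into, hence onto, itself,
     so it hits \<open>w a = (w \<circ> inv u) (u a)\<close> from inside the interval\<close>
  define I where "I = {u a <.. w a}"
  define g where "g = w \<circ> inv u"
  have inv_u: "\<And>v. u (inv u v) = v" using S_inf_inv_cancel[OF u] by auto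
  have inj_w: "\<And>x y. w x = w y \<longleftrightarrow> x = y" using S_inf_inj_iff[OF kbruhat_critD(1)[OF crit]] .
  have "g v \<in> I" if "v \<in> I" for v
  proof -
    define q where "q = inv u v"
    have uq: "u q = v" unfolding q_def using inv_u by simp
    have "0 < q"
    proof (rule ccontr)
      assume "\<not> 0 < q"
      then have "v = 0" using uq S_infD(2)[OF u] by simp
      then show False using that unfolding I_def by simp
    qed
    show ?thesis
    proof (cases "q \<le> k")
      case True
      then show ?thesis using top[of q] \<open>0 < q\<close> uq that unfolding g_def q_def I_def by auto
    next
      case False
      then have "w q \<le> u q" "\<not> w q \<le> u a"
        using kbruhat_critD(3)[OF crit] none uq that unfolding I_def by auto
      then show ?thesis using uq that unfolding g_def q_def I_def by auto
    qed
  qed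
  moreover have "inj_on g I"
  proof (rule inj_onI)
    fix x y assume "g x = g y"
    then have "inv u x = inv u y" using inj_w by (simp add: g_def)
    then show "x = y" by (metis inv_u)
  qed
  ultimately have "g ` I = I" by (intro endo_inj_surj) (auto simp: I_def)
  moreover have "w a \<in> I" using a unfolding I_def by simp
  ultimately obtain v where "v \<in> I" "w a = g v" by blast
  then have "inv u v = a" using inj_w unfolding g_def by simp
  then have "v = u a" by (metis inv_u)
  then show False using \<open>v \<in> I\<close> unfolding I_def by simp
qed

lemma kbruhat_crit_exists_least_partner:
  assumes u: "u \<in> S_inf" and crit: "kbruhat_crit k u w" and a: "0 < a" "a \<le> k" "u a < w a"
    and top: "\<And>i. 0 < i \<Longrightarrow> i \<le> k \<Longrightarrow> u a < u i \<Longrightarrow> w i = u i"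
  obtains b where "k < b" "u a < u b" "u b \<le> w a" "w b \<le> u a"
    "\<And>j. k < j \<Longrightarrow> u a < u j \<Longrightarrow> u j < u b \<Longrightarrow> u a < w j"
proof -
  define B where "B = {b. k < b \<and> u a < u b \<and> u b \<le> w a \<and> w b \<le> u a}"
  obtain b0 where "b0 \<in> B"
    using kbruhat_crit_exists_partner[OF assms] unfolding B_def by blast
  then obtain b where "b \<in> B" and least: "\<And>j. j \<in> B \<Longrightarrow> u b \<le> u j"
    using ex_has_least_nat[of "\<lambda>b. b \<in> B" b0 u] by blast
  have "u a < w j" if "k < j" "u a < u j" "u j < u b" for j
  proof (rule ccontr)
    assume "\<not> u a < w j"
    then have "j \<in> B" using that \<open>b \<in> B\<close> unfolding B_def by auto
    then show False using least[of j] that by simp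
  qed
  then show ?thesis using that \<open>b \<in> B\<close> unfolding B_def by blast
qed

text \<open>Here \<open>a \<le> k\<close> is the position of largest value among those whose value must still be raised,
  and \<open>b > k\<close> is a partner of least value (see \<open>kbruhat_crit_step\<close>).\<close>

context
  fixes k u w a b
  assumes u: "u \<in> S_inf" and crit: "kbruhat_crit k u w"
    and a: "0 < a" "a \<le> k" "u a < w a"
    and top: "\<And>i. 0 < i \<Longrightarrow> i \<le> k \<Longrightarrow> u a < u i \<Longrightarrow> w i = u i"
    and b: "k < b" "u a < u b" "u b \<le> w a" "w b \<le> u a"
    and least: "\<And>j. k < j \<Longrightarrow> u a < u j \<Longrightarrow> u j < u b \<Longrightarrow> u a < w j"
begin

lemma kcover_swap_partner: "kcover k u (u \<circ> transpose a b)"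
proof -
  have "\<not> (u a < u c \<and> u c < u b)" if "a < c" "c < b" for c
  proof
    assume c: "u a < u c \<and> u c < u b"
    show False
    proof (cases "c \<le> k")
      case True
      then have "w a < w c" "w c = u c"
        using kbruhat_critD(4)[OF crit, of a c] top[of c] a c that by auto
      then show False using c b by simp
    next
      case False
      then have "w c < w b" "u a < w c"
        using kbruhat_critD(4)[OF crit, of c b] least[of c] a c that by auto
      then show False using b by simp
    qed
  qed
  then show ?thesis
    unfolding kcover_iff using u a b by (intro conjI exI[of _ a] exI[of _ b]) auto
qed

lemma kbruhat_crit_swap_partner_order:
  assumes ij: "0 < i" "i < j" "j \<le> k \<or> k < i"
    and less: "(u \<circ> transpose a b) i < (u \<circ> transpose a b) j"
  shows "w i < w j"
proof -
  define u' where "u' = u \<circ> transpose a b"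
  have u'a: "u' a = u b" and u'b: "u' b = u a" and u'c: "\<And>c. c \<noteq> a \<Longrightarrow> c \<noteq> b \<Longrightarrow> u' c = u c"
    unfolding u'_def by (auto simp: transpose_def)
  note crit = kbruhat_critD(4)[OF crit]
  consider "i = a" | "j = a" | "i = b" | "j = b" | "{i, j} \<inter> {a, b} = {}" by auto
  then show ?thesis
  proof cases
    case 1
    then have "j \<le> k" "u a < u j" using ij less a b u'a u'c[of j] unfolding u'_def[symmetric] by auto
    then show ?thesis using crit[of a j] ij 1 by simp
  next
    case 2
    then have "i \<noteq> b" "u i < u b" using ij less a b u'a u'c[of i] unfolding u'_def[symmetric] by auto
    show ?thesis
    proof (cases "u i < u a")
      case True
      then show ?thesis using crit[of i a] ij 2 a by simp
    next
      case False
      then have "u a < u i" using S_inf_inj_iff[OF u, of i a] ij 2 by auto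
      then show ?thesis using top[of i] \<open>u i < u b\<close> ij 2 a b by auto
    qed
  next
    case 3
    then have "k < j" "j \<noteq> a" "u a < u j" using ij less a b u'b u'c[of j] unfolding u'_def[symmetric] by auto
    show ?thesis
    proof (cases "u b < u j")
      case True
      then show ?thesis using crit[of b j] ij 3 b by simp
    next
      case False
      then have "u j < u b" using S_inf_inj_iff[OF u, of j b] ij 3 by auto
      then show ?thesis using least[of j] \<open>k < j\<close> \<open>u a < u j\<close> 3 b by simp
    qed
  next
    case 4
    then have "k < i" "u i < u b" using ij less a b u'b u'c[of i] unfolding u'_def[symmetric] by auto
    then show ?thesis using crit[of i b] ij 4 by simp
  next
    case 5
    then show ?thesis using ij less crit[of i j] u'c unfolding u'_def[symmetric] by auto
  qed
qed

lemma kbruhat_crit_swap_partner: "kbruhat_crit k (u \<circ> transpose a b) w"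
proof -
  have "(u \<circ> transpose a b) i \<le> w i" if "0 < i" "i \<le> k" for i
    using kbruhat_critD(2)[OF crit that] that a b by (cases "i = a") (auto simp: transpose_def)
  moreover have "w i \<le> (u \<circ> transpose a b) i" if "k < i" for i
    using kbruhat_critD(3)[OF crit that] that a b by (cases "i = b") (auto simp: transpose_def)
  ultimately show ?thesis
    using kbruhat_critD(1)[OF crit] kbruhat_crit_swap_partner_order unfolding kbruhat_crit_def by blast
qed

end

lemma kbruhat_crit_step:
  assumes u: "u \<in> S_inf" and crit: "kbruhat_crit k u w" and ne: "u \<noteq> w"
  obtains u' where "kcover k u u'" "kbruhat_crit k u' w"
    "(\<Sum>i\<in>{1..k}. w i - u' i) < (\<Sum>i\<in>{1..k}. w i - u i)"
proof -
  define A where "A = {a. 0 < a \<and> a \<le> k \<and> u a < w a}"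
  have "finite A" unfolding A_def by (rule finite_subset[of _ "{..k}"]) auto
  moreover have "A \<noteq> {}" using kbruhat_crit_exists_raised[OF assms] unfolding A_def by blast
  ultimately have "Max (u ` A) \<in> u ` A" by simp
  then obtain a where "a \<in> A" and ua: "Max (u ` A) = u a" by blast
  have amax: "u a' \<le> u a" if "a' \<in> A" for a'
    using \<open>finite A\<close> that ua[symmetric] by simp
  have a: "0 < a" "a \<le> k" "u a < w a" using \<open>a \<in> A\<close> unfolding A_def by auto
  have top: "w i = u i" if "0 < i" "i \<le> k" "u a < u i" for i
    using kbruhat_critD(2)[OF crit that(1,2)] amax[of i] that unfolding A_def by fastforce
  obtain b where b: "k < b" "u a < u b" "u b \<le> w a" "w b \<le> u a"
    and least: "\<And>j. k < j \<Longrightarrow> u a < u j \<Longrightarrow> u j < u b \<Longrightarrow> u a < w j"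
    using kbruhat_crit_exists_least_partner[OF u crit a top] by blast
  define u' where "u' = u \<circ> transpose a b"
  have "w i - u' i \<le> w i - u i" if "i \<in> {1..k}" for i
    using that a b unfolding u'_def by (auto simp: transpose_def)
  moreover have "w a - u' a < w a - u a"
    using a b unfolding u'_def by simp
  ultimately have "(\<Sum>i\<in>{1..k}. w i - u' i) < (\<Sum>i\<in>{1..k}. w i - u i)"
    using a by (intro sum_strict_mono_ex1) auto
  then show ?thesis
    using that kcover_swap_partner[OF u crit a top b] kbruhat_crit_swap_partner[OF u crit a top b] least
    unfolding u'_def by blast
qed

lemma kbruhat_crit_imp_kbruhat:
  assumes "u \<in> S_inf" "kbruhat_crit k u w"
  shows "kbruhat k u w"
  using assms
proof (induction "\<Sum>i\<in>{1..k}. w i - u i" arbitrary: u rule: less_induct)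
  case less
  show ?case
  proof (cases "u = w")
    case True
    then show ?thesis unfolding kbruhat_def by simp
  next
    case False
    then obtain u' where "kcover k u u'" "kbruhat_crit k u' w"
      "(\<Sum>i\<in>{1..k}. w i - u' i) < (\<Sum>i\<in>{1..k}. w i - u i)"
      using kbruhat_crit_step[OF less.prems] by blast
    then show ?thesis
      using less.hyps[of u'] kcover_S_inf unfolding kbruhat_def
      by (meson converse_rtranclp_into_rtranclp)
  qed
qed

theorem kbruhat_iff_crit: "u \<in> S_inf \<Longrightarrow> kbruhat k u w \<longleftrightarrow> kbruhat_crit k u w"
  using kbruhat_imp_crit kbruhat_crit_imp_kbruhat by blast

section \<open>A closed formula for \<open>\<ell>\<^sub>u\<close>\<close>

definition drift :: "(nat \<Rightarrow> nat) \<Rightarrow> nat \<Rightarrow> int" where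
  "drift z x = sgn (int (z x) - int x)"

definition ell_term :: "(nat \<Rightarrow> nat) \<Rightarrow> nat \<Rightarrow> nat \<Rightarrow> int" where
  "ell_term z x y = (if x < y \<and> z y < z x then - (drift z x * drift z y) else 0)"

definition ell_sum :: "(nat \<Rightarrow> nat) \<Rightarrow> int" where
  "ell_sum z = (\<Sum>x\<in>{i. z i \<noteq> i}. \<Sum>y\<in>{i. z i \<noteq> i}. ell_term z x y)"

lemma ell_sum_eq_sum:
  assumes "finite A" "{i. z i \<noteq> i} \<subseteq> A"
  shows "ell_sum z = (\<Sum>x\<in>A. \<Sum>y\<in>A. ell_term z x y)"
proof -
  have zero: "ell_term z x y = 0" if "z x = x \<or> z y = y" for x y
    using that unfolding ell_term_def drift_def by auto
  have "(\<Sum>y\<in>{i. z i \<noteq> i}. ell_term z x y) = (\<Sum>y\<in>A. ell_term z x y)" for x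
    using assms zero by (intro sum.mono_neutral_left) auto
  then have "ell_sum z = (\<Sum>x\<in>{i. z i \<noteq> i}. \<Sum>y\<in>A. ell_term z x y)"
    unfolding ell_sum_def by simp
  also have "\<dots> = (\<Sum>x\<in>A. \<Sum>y\<in>A. ell_term z x y)"
    using assms zero by (intro sum.mono_neutral_left) auto
  finally show ?thesis .
qed

lemma ell_sum_eq_sum_atLeastAtMost:
  assumes "z \<in> S_inf" "\<forall>x>N. z x = x"
  shows "ell_sum z = (\<Sum>x\<in>{1..N}. \<Sum>y\<in>{1..N}. ell_term z x y)"
proof (rule ell_sum_eq_sum)
  show "{i. z i \<noteq> i} \<subseteq> {1..N}"
  proof
    fix x assume "x \<in> {i. z i \<noteq> i}"
    then have zx: "z x \<noteq> x" by simp
    have "x \<noteq> 0"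
    proof
      assume "x = 0"
      then show False using zx S_infD(2)[OF assms(1)] by simp
    qed
    moreover have "\<not> N < x" using zx assms(2) by auto
    ultimately show "x \<in> {1..N}" by simp
  qed
qed simp

lemma card_crossings_fixed_point:
  assumes z: "z \<in> S_inf" "\<forall>x>N. z x = x" and c: "c \<in> {1..N}" "z c = c"
  shows "card {y\<in>{1..N}. c < y \<and> z y < c} = card {x\<in>{1..N}. x < c \<and> c < z x}"
proof -
  define P where "P = {v\<in>{1..N}. z v < c}"
  define Q where "Q = {v\<in>{1..N}. v < c}"
  have inj: "\<And>x y. z x = z y \<longleftrightarrow> x = y" using S_inf_inj_iff[OF z(1)] .
  have "z ` P = {1..<c}"
  proof
    show "z ` P \<subseteq> {1..<c}"
      unfolding P_def using S_inf_pos[OF z(1)] by (auto simp: Suc_le_eq)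
    show "{1..<c} \<subseteq> z ` P"
    proof
      fix v assume v: "v \<in> {1..<c}"
      then have "v \<in> z ` {1..N}"
        using c bij_betw_imp_surj_on[OF S_inf_bij_betw_atLeastAtMost[OF z]] by auto
      then show "v \<in> z ` P" using v unfolding P_def by auto
    qed
  qed
  moreover have "inj_on z P" using inj by (auto intro: inj_onI)
  moreover have "Q = {1..<c}" using c unfolding Q_def by auto
  ultimately have "card P = card Q" by (metis card_image)
  then have "card (P - Q) = card (Q - P)"
    by (simp add: card_Diff_subset_Int Int_commute P_def Q_def)
  moreover have "P - Q = {y\<in>{1..N}. c < y \<and> z y < c}"
    using c(2) unfolding P_def Q_def by (force simp: not_less le_less)
  moreover have "Q - P = {x\<in>{1..N}. x < c \<and> c < z x}"
    using c(2) inj[of _ c] unfolding P_def Q_def by (force simp: not_less le_less)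
  ultimately show ?thesis by simp
qed

lemma sum_crossings_fixed_points:
  fixes \<tau> :: "nat \<Rightarrow> int"
  assumes z: "z \<in> S_inf" "\<forall>x>N. z x = x"
  shows "(\<Sum>x\<in>{1..N}. \<Sum>y\<in>{1..N}. (if z x = x \<and> x < y \<and> z y < x then \<tau> x else 0)
            - (if z y = y \<and> x < y \<and> y < z x then \<tau> y else 0)) = 0"
proof -
  have out: "(\<Sum>x\<in>{1..N}. \<Sum>y\<in>{1..N}. if z x = x \<and> x < y \<and> z y < x then \<tau> x else 0)
      = (\<Sum>c\<in>{1..N}. if z c = c then \<tau> c * int (card {y\<in>{1..N}. c < y \<and> z y < c}) else 0)"
    by (intro sum.cong refl) (simp add: sum.If_cases Int_def conj_ac)
  have "(\<Sum>x\<in>{1..N}. \<Sum>y\<in>{1..N}. if z y = y \<and> x < y \<and> y < z x then \<tau> y else 0)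
      = (\<Sum>y\<in>{1..N}. \<Sum>x\<in>{1..N}. if z y = y \<and> x < y \<and> y < z x then \<tau> y else 0)"
    by (rule sum.swap)
  also have "\<dots> = (\<Sum>c\<in>{1..N}. if z c = c then \<tau> c * int (card {x\<in>{1..N}. x < c \<and> c < z x}) else 0)"
    by (intro sum.cong refl) (simp add: sum.If_cases Int_def conj_ac)
  also have "\<dots> = (\<Sum>c\<in>{1..N}. if z c = c then \<tau> c * int (card {y\<in>{1..N}. c < y \<and> z y < c}) else 0)"
    using card_crossings_fixed_point[OF z] by (intro sum.cong refl) simp
  finally show ?thesis
    using out by (simp add: sum_subtractf)
qed

lemma signed_inversion_split:
  fixes x y zx zy px py k :: nat
  assumes inv: "x < y" "zy < zx" and "px \<noteq> py"
    and drift_x: "px \<le> k \<Longrightarrow> x \<le> zx" "k < px \<Longrightarrow> zx \<le> x"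
    and drift_y: "py \<le> k \<Longrightarrow> y \<le> zy" "k < py \<Longrightarrow> zy \<le> y"
    and order: "px < py \<Longrightarrow> py \<le> k \<or> k < px \<Longrightarrow> zx < zy"
  shows "(if px < py then 1 else -1) + sgn (int zx - int x) * sgn (int zy - int y)
     = (if zx = x \<and> zy < x then (if px \<le> k then 1 else -1) else 0)
       - (if zy = y \<and> y < zx then (if py \<le> k then 1 else -1) else (0::int))"
  using assms by (cases "px \<le> k"; cases "py \<le> k"; cases "px < py") (auto simp: sgn_if)

lemma sum_sum_split_diagonal:
  fixes d :: "'a::linorder \<Rightarrow> 'a \<Rightarrow> 'b::comm_monoid_add"
  assumes "finite A"
  shows "(\<Sum>x\<in>A. \<Sum>y\<in>A. d x y) = (\<Sum>x\<in>A. \<Sum>y\<in>A. if x < y then d x y + d y x else 0) + (\<Sum>x\<in>A. d x x)"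
proof -
  have "(\<Sum>x\<in>A. \<Sum>y\<in>A. d x y) = (\<Sum>x\<in>A. \<Sum>y\<in>A. (if x < y then d x y else 0)
      + (if y < x then d x y else 0) + (if x = y then d x y else 0))"
    by (intro sum.cong refl) auto
  also have "\<dots> = (\<Sum>x\<in>A. \<Sum>y\<in>A. if x < y then d x y else 0) + (\<Sum>x\<in>A. \<Sum>y\<in>A. if y < x then d x y else 0)
      + (\<Sum>x\<in>A. \<Sum>y\<in>A. if x = y then d x y else 0)"
    by (simp add: sum.distrib)
  also have "(\<Sum>x\<in>A. \<Sum>y\<in>A. if y < x then d x y else 0) = (\<Sum>x\<in>A. \<Sum>y\<in>A. if x < y then d y x else 0)"
    by (rule sum.swap)
  also have "(\<Sum>x\<in>A. \<Sum>y\<in>A. if x = y then d x y else 0) = (\<Sum>x\<in>A. d x x)"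
    using assms by (simp add: sum.delta)
  finally show ?thesis
    by (simp add: sum.distrib[symmetric] if_distrib cong: if_cong)
qed

lemma sum_sum_reindex_bij_betw:
  assumes "bij_betw h A A"
  shows "(\<Sum>x\<in>A. \<Sum>y\<in>A. g x y) = (\<Sum>x\<in>A. \<Sum>y\<in>A. g (h x) (h y))"
proof -
  have "(\<Sum>y\<in>A. g x y) = (\<Sum>y\<in>A. g x (h y))" for x
    using sum.reindex_bij_betw[OF assms, of "g x"] by simp
  then show ?thesis
    using sum.reindex_bij_betw[OF assms, of "\<lambda>x. \<Sum>y\<in>A. g x (h y)"] by simp
qed

lemma len_comp_eq_sum_inv:
  assumes u: "u \<in> S_inf" and z: "z \<in> S_inf" and N: "\<forall>x>N. u x = x" "\<forall>x>N. z x = x"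
  shows "int (len (z \<circ> u)) = (\<Sum>x\<in>{1..N}. \<Sum>y\<in>{1..N}. if inv u x < inv u y \<and> z y < z x then 1 else 0)"
proof -
  have "\<forall>x>N. inv u x = x" using N(1) S_inf_inv_cancel(2)[OF u] by metis
  then have bij: "bij_betw (inv u) {1..N} {1..N}"
    by (rule S_inf_bij_betw_atLeastAtMost[OF S_inf_inv[OF u]])
  have "\<forall>x>N. (z \<circ> u) x = x" using N by simp
  then have "int (len (z \<circ> u)) = (\<Sum>i\<in>{1..N}. \<Sum>j\<in>{1..N}. if i < j \<and> z (u j) < z (u i) then 1 else 0)"
    using len_eq_sum[OF S_inf_comp[OF z u]] by simp
  also have "\<dots> = (\<Sum>x\<in>{1..N}. \<Sum>y\<in>{1..N}. if inv u x < inv u y \<and> z (u (inv u y)) < z (u (inv u x)) then 1 else 0)"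
    by (rule sum_sum_reindex_bij_betw[OF bij])
  finally show ?thesis
    by (simp add: S_inf_inv_cancel(1)[OF u])
qed

lemma len_comp_sub_len:
  assumes u: "u \<in> S_inf" and z: "z \<in> S_inf" and N: "\<forall>x>N. u x = x" "\<forall>x>N. z x = x"
  shows "int (len (z \<circ> u)) - int (len u) = (\<Sum>x\<in>{1..N}. \<Sum>y\<in>{1..N}.
            if x < y \<and> z y < z x then (if inv u x < inv u y then 1 else -1) else 0)"
proof -
  define d where "d x y = (if inv u x < inv u y \<and> z y < z x then 1 else 0)
      - (if inv u x < inv u y \<and> y < x then 1 else (0::int))" for x y
  have "int (len u) = int (len (id \<circ> u))" by simp
  also have "\<dots> = (\<Sum>x\<in>{1..N}. \<Sum>y\<in>{1..N}. if inv u x < inv u y \<and> y < x then 1 else 0)"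
    using len_comp_eq_sum_inv[OF u _ N(1), of id] unfolding S_inf_def by simp
  finally have "int (len (z \<circ> u)) - int (len u) = (\<Sum>x\<in>{1..N}. \<Sum>y\<in>{1..N}. d x y)"
    unfolding len_comp_eq_sum_inv[OF assms] d_def by (simp add: sum_subtractf)
  also have "\<dots> = (\<Sum>x\<in>{1..N}. \<Sum>y\<in>{1..N}. if x < y then d x y + d y x else 0)"
    by (subst sum_sum_split_diagonal) (auto simp: d_def)
  also have "\<dots> = (\<Sum>x\<in>{1..N}. \<Sum>y\<in>{1..N}.
      if x < y \<and> z y < z x then (if inv u x < inv u y then 1 else -1) else 0)"
  proof (intro sum.cong refl)
    fix x y :: nat
    show "(if x < y then d x y + d y x else 0)
        = (if x < y \<and> z y < z x then (if inv u x < inv u y then 1 else -1) else 0)"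
    proof (cases "x < y")
      case True
      then have "inv u x \<noteq> inv u y" "z x \<noteq> z y"
        using S_inf_inj_iff[OF S_inf_inv[OF u]] S_inf_inj_iff[OF z] by auto
      then show ?thesis unfolding d_def using True by (auto simp: nat_neq_iff)
    qed simp
  qed
  finally show ?thesis .
qed

lemma kbruhat_crit_comp_iff:
  assumes u: "u \<in> S_inf" and z: "z \<in> S_inf"
  shows "kbruhat_crit k u (z \<circ> u) \<longleftrightarrow>
    (\<forall>x. 0 < x \<and> inv u x \<le> k \<longrightarrow> x \<le> z x) \<and> (\<forall>x. k < inv u x \<longrightarrow> z x \<le> x) \<and>
    (\<forall>x y. 0 < x \<and> inv u x < inv u y \<and> (inv u y \<le> k \<or> k < inv u x) \<and> x < y \<longrightarrow> z x < z y)"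
proof -
  have inv_u: "\<And>x. u (inv u x) = x" "\<And>i. inv u (u i) = i" using S_inf_inv_cancel[OF u] by auto
  have pos: "0 < u i \<longleftrightarrow> 0 < i" for i
    using S_inf_pos[OF u, of i] S_inf_pos[OF S_inf_inv[OF u], of "u i"] inv_u(2) by auto
  have all1: "(\<forall>i. Q i) \<longleftrightarrow> (\<forall>x. Q (inv u x))" for Q by (metis inv_u(2))
  have all2: "(\<forall>i j. Q i j) \<longleftrightarrow> (\<forall>x y. Q (inv u x) (inv u y))" for Q by (metis inv_u(2))
  show ?thesis
    unfolding kbruhat_crit_def
    by (subst (1 2) all1, subst all2) (use S_inf_comp[OF z u] pos[of "inv u _"] in \<open>simp add: inv_u\<close>)
qed

text \<open>Pair by pair, the signed inversion count of \<open>len_comp_sub_len\<close> and \<open>ell_sum z\<close> differ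
  only on pairs containing a fixed point of \<open>z\<close>; summed up, these differences cancel by
  \<open>card_crossings_fixed_point\<close>.\<close>

theorem len_comp_sub_len_eq_ell_sum:
  assumes u: "u \<in> S_inf" and z: "z \<in> S_inf" and crit: "kbruhat_crit k u (z \<circ> u)"
  shows "int (len (z \<circ> u)) - int (len u) = ell_sum z"
proof -
  obtain N0 where N0: "\<forall>x>N0. u x = x" using S_inf_fixes_above[OF u] by blast
  obtain N where N: "N0 \<le> N" "\<forall>x>N. z x = x" using S_inf_fixes_above[OF z] by blast
  have uN: "\<forall>x>N. u x = x" using N0 N(1) by simp
  define \<tau> where "\<tau> c = (if inv u c \<le> k then 1 else (-1::int))" for c
  have crit': "0 < x \<Longrightarrow> inv u x \<le> k \<Longrightarrow> x \<le> z x" "k < inv u x \<Longrightarrow> z x \<le> x"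
    "0 < x \<Longrightarrow> inv u x < inv u y \<Longrightarrow> inv u y \<le> k \<or> k < inv u x \<Longrightarrow> x < y \<Longrightarrow> z x < z y" for x y
    using crit unfolding kbruhat_crit_comp_iff[OF u z] by blast+
  have "(if x < y \<and> z y < z x then (if inv u x < inv u y then 1 else -1) else 0) - ell_term z x y
      = (if z x = x \<and> x < y \<and> z y < x then \<tau> x else 0) - (if z y = y \<and> x < y \<and> y < z x then \<tau> y else 0)"
    if "x \<in> {1..N}" "y \<in> {1..N}" for x y
  proof (cases "x < y \<and> z y < z x")
    case True
    have "inv u x \<noteq> inv u y" using True S_inf_inj_iff[OF S_inf_inv[OF u]] by auto
    from signed_inversion_split[OF _ _ this crit'(1,2) crit'(1,2) crit'(3)] True that
    show ?thesis unfolding ell_term_def drift_def \<tau>_def by auto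
  next
    case False
    then show ?thesis unfolding ell_term_def by auto
  qed
  then have "int (len (z \<circ> u)) - int (len u) - ell_sum z
      = (\<Sum>x\<in>{1..N}. \<Sum>y\<in>{1..N}. (if z x = x \<and> x < y \<and> z y < x then \<tau> x else 0)
          - (if z y = y \<and> x < y \<and> y < z x then \<tau> y else 0))"
    unfolding len_comp_sub_len[OF u z uN N(2)] ell_sum_eq_sum_atLeastAtMost[OF z N(2)]
    by (simp add: sum_subtractf[symmetric])
  then show ?thesis
    using sum_crossings_fixed_points[OF z N(2)] by simp
qed

lemma S_infI_inj_on:
  assumes inj: "inj_on p {1..N}" and into: "p ` {1..N} \<subseteq> {1..N}" and out: "\<And>x. x \<notin> {1..N} \<Longrightarrow> p x = x"
  shows "p \<in> S_inf"
proof -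
  have "bij_betw p {1..N} {1..N}"
    using endo_inj_surj[OF _ into inj] inj by (simp add: bij_betw_def)
  moreover have "bij_betw p (- {1..N}) (- {1..N})"
    using out by (subst bij_betw_cong[of _ _ id]) auto
  ultimately have "bij_betw p ({1..N} \<union> - {1..N}) ({1..N} \<union> - {1..N})"
    by (rule bij_betw_combine) auto
  moreover have "{i. p i \<noteq> i} \<subseteq> {1..N}" using out by blast
  then have "finite {i. p i \<noteq> i}" by (rule finite_subset) simp
  moreover have "p 0 = 0" by (rule out) simp
  ultimately show ?thesis unfolding S_inf_def by simp
qed

lemma card_ge_elems_less:
  fixes A :: "'a::linorder set"
  assumes "finite A" "x \<in> A" "x' \<in> A" "x < x'"
  shows "card {y\<in>A. x' \<le> y} < card {y\<in>A. x \<le> y}"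
proof (rule psubset_card_mono)
  have "x \<le> y" if "x' \<le> y" for y using assms(4) that by simp
  moreover have "x \<in> {y\<in>A. x \<le> y}" "x \<notin> {y\<in>A. x' \<le> y}" using assms(2,4) by auto
  ultimately show "{y\<in>A. x' \<le> y} \<subset> {y\<in>A. x \<le> y}" by blast
qed (use assms(1) in auto)

lemma card_ge_elems_bounds:
  fixes A :: "'a::linorder set"
  assumes "finite A" "x \<in> A"
  shows "0 < card {y\<in>A. x \<le> y}" "card {y\<in>A. x \<le> y} \<le> card A"
proof -
  have "x \<in> {y\<in>A. x \<le> y}" using assms(2) by simp
  then show "0 < card {y\<in>A. x \<le> y}" using assms(1) by (auto simp: card_gt_0_iff)
  show "card {y\<in>A. x \<le> y} \<le> card A" using assms(1) by (auto intro: card_mono)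
qed

definition block_rank :: "nat set \<Rightarrow> nat set \<Rightarrow> nat \<Rightarrow> nat" where
  "block_rank L D x = (if x \<in> L then card {y\<in>L. x \<le> y}
     else if x \<in> D then card L + card {y\<in>D. x \<le> y} else x)"

context
  fixes L D :: "nat set" and N :: nat
  assumes disj: "L \<inter> D = {}" and cover: "L \<union> D = {1..N}"
begin

lemma block_rank_finite: "finite L" "finite D"
  using cover finite_subset[of _ "{1..N}"] by auto

lemma block_rank_left: "x \<in> L \<Longrightarrow> 0 < block_rank L D x \<and> block_rank L D x \<le> card L"
  using card_ge_elems_bounds[OF block_rank_finite(1)] unfolding block_rank_def by auto

lemma block_rank_right: "x \<in> D \<Longrightarrow> card L < block_rank L D x \<and> block_rank L D x \<le> N"
proof -
  have "card L + card D = N"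
    using card_Un_disjoint[OF block_rank_finite disj] cover by simp
  then show "x \<in> D \<Longrightarrow> card L < block_rank L D x \<and> block_rank L D x \<le> N"
    using card_ge_elems_bounds[OF block_rank_finite(2)] disj unfolding block_rank_def by fastforce
qed

lemma block_rank_outside: "x \<notin> {1..N} \<Longrightarrow> block_rank L D x = x"
  using cover unfolding block_rank_def by auto

lemma block_rank_less_left: "x \<in> L \<Longrightarrow> y \<in> L \<Longrightarrow> x < y \<Longrightarrow> block_rank L D y < block_rank L D x"
  using card_ge_elems_less[OF block_rank_finite(1)] unfolding block_rank_def by auto

lemma block_rank_less_right: "x \<in> D \<Longrightarrow> y \<in> D \<Longrightarrow> x < y \<Longrightarrow> block_rank L D y < block_rank L D x"
  using card_ge_elems_less[OF block_rank_finite(2)] disj unfolding block_rank_def by auto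

lemma block_rank_card_le: "card L \<le> N"
  using card_mono[of "{1..N}" L] cover by auto

lemma block_rank_le_card_imp_left:
  assumes "0 < x" "block_rank L D x \<le> card L"
  shows "x \<in> L"
proof (rule ccontr)
  assume "x \<notin> L"
  show False
  proof (cases "x \<in> D")
    case True
    then show False using block_rank_right[of x] assms by simp
  next
    case False
    then have "N < x" using \<open>x \<notin> L\<close> cover assms(1) by fastforce
    then show False using block_rank_outside[of x] assms block_rank_card_le by simp
  qed
qed

lemma block_rank_increasing_pair:
  assumes x: "0 < x" "x < y" and less: "block_rank L D x < block_rank L D y"
    and side: "block_rank L D y \<le> card L \<or> card L < block_rank L D x"
  shows "x \<in> D \<and> N < y \<or> N < x"
proof (cases "block_rank L D y \<le> card L")
  case True
  then have "x \<in> L" "y \<in> L" using block_rank_le_card_imp_left x less by auto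
  then show ?thesis using block_rank_less_left x less by fastforce
next
  case False
  then have "x \<notin> L" "y \<notin> L" using side less block_rank_left by fastforce+
  consider "x \<in> D" "y \<in> D" | "x \<in> D" "y \<notin> D" | "x \<notin> D" by blast
  then show ?thesis
  proof cases
    case 1
    then show ?thesis using block_rank_less_right x less by fastforce
  next
    case 2
    then show ?thesis using \<open>y \<notin> L\<close> cover x by fastforce
  next
    case 3
    then show ?thesis using \<open>x \<notin> L\<close> cover x by fastforce
  qed
qed

lemma block_rank_S_inf: "block_rank L D \<in> S_inf"
proof (rule S_infI_inj_on[of _ N])
  show "inj_on (block_rank L D) {1..N}"
  proof (rule linorder_inj_onI')
    fix x y assume "x \<in> {1..N}" "y \<in> {1..N}" "x < y"
    then consider "x \<in> L" "y \<in> L" | "x \<in> D" "y \<in> D" | "x \<in> L" "y \<in> D" | "x \<in> D" "y \<in> L"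
      using cover by blast
    then show "block_rank L D x \<noteq> block_rank L D y"
    proof cases
      case 1
      then show ?thesis using block_rank_less_left \<open>x < y\<close> by (metis less_irrefl)
    next
      case 2
      then show ?thesis using block_rank_less_right \<open>x < y\<close> by (metis less_irrefl)
    next
      case 3
      then show ?thesis using block_rank_left[of x] block_rank_right[of y] by simp
    next
      case 4
      then show ?thesis using block_rank_left[of y] block_rank_right[of x] by simp
    qed
  qed
  show "block_rank L D ` {1..N} \<subseteq> {1..N}"
  proof
    fix r assume "r \<in> block_rank L D ` {1..N}"
    obtain x where "x \<in> L \<union> D" "r = block_rank L D x"
      using \<open>r \<in> block_rank L D ` {1..N}\<close> cover by blast
    then show "r \<in> {1..N}"
      using block_rank_left[of x] block_rank_right[of x] block_rank_card_le by auto
  qed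
qed (rule block_rank_outside)

end

text \<open>The witness puts the weak excedances \<open>x \<le> z x\<close> on the positions \<open>1..k\<close> and the
  points with \<open>z x < x\<close> on the positions after \<open>k\<close>, both in decreasing order, so that the
  order condition of the criterion only concerns pairs involving a fixed point beyond \<open>N\<close>.\<close>

lemma exists_kbruhat_crit_comp:
  assumes z: "z \<in> S_inf"
  obtains u k where "0 < k" "u \<in> S_inf" "kbruhat_crit k u (z \<circ> u)"
proof -
  obtain N where N: "1 \<le> N" "\<forall>x>N. z x = x" using S_inf_fixes_above[OF z] by blast
  define L where "L = {x\<in>{1..N}. x \<le> z x}"
  define D where "D = {x\<in>{1..N}. z x < x}"
  define p where "p = block_rank L D"
  have LD: "L \<inter> D = {}" "L \<union> D = {1..N}" unfolding L_def D_def by auto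
  have p: "p \<in> S_inf" unfolding p_def by (rule block_rank_S_inf[OF LD])
  define u where "u = inv p"
  have u: "u \<in> S_inf" and inv_u: "inv u = p"
    unfolding u_def using S_inf_inv[OF p] inv_inv_eq[OF S_infD(1)[OF p]] by auto
  have "1 \<in> L" using N S_inf_pos[OF z, of 1] unfolding L_def by auto
  then have "0 < card L" using block_rank_left[OF LD] by fastforce
  have "x \<le> z x" if "0 < x" "p x \<le> card L" for x
    using block_rank_le_card_imp_left[OF LD that[unfolded p_def]] unfolding L_def by simp
  moreover have "z x \<le> x" if "card L < p x" for x
  proof -
    have "x \<notin> L" using block_rank_left[OF LD, of x] that unfolding p_def by auto
    then have "x \<in> D \<or> x = 0 \<or> N < x" using LD(2) by fastforce
    then show ?thesis using N(2) S_infD(2)[OF z] unfolding D_def by auto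
  qed
  moreover have "z x < z y"
    if "0 < x" "p x < p y" "p y \<le> card L \<or> card L < p x" "x < y" for x y
    using block_rank_increasing_pair[OF LD, of x y] that N(2) unfolding p_def D_def by auto
  ultimately have "kbruhat_crit (card L) u (z \<circ> u)"
    unfolding kbruhat_crit_comp_iff[OF u z] inv_u by blast
  then show ?thesis using that \<open>0 < card L\<close> u by blast
qed

theorem ell_u_eq_ell_sum:
  assumes z: "z \<in> S_inf"
  shows "ell_u z = ell_sum z"
  unfolding ell_u_def
proof (rule some_equality)
  obtain u k where "0 < k" "u \<in> S_inf" "kbruhat_crit k u (z \<circ> u)"
    using exists_kbruhat_crit_comp[OF z] .
  then show "\<exists>u k. 1 \<le> k \<and> u \<in> S_inf \<and> kbruhat k u (z \<circ> u) \<and>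
      ell_sum z = int (len (z \<circ> u)) - int (len u)"
    using kbruhat_iff_crit len_comp_sub_len_eq_ell_sum[OF _ z] by (metis One_nat_def Suc_leI)
next
  fix n assume "\<exists>u k. 1 \<le> k \<and> u \<in> S_inf \<and> kbruhat k u (z \<circ> u) \<and> n = int (len (z \<circ> u)) - int (len u)"
  then show "n = ell_sum z"
    using kbruhat_iff_crit len_comp_sub_len_eq_ell_sum[OF _ z] by metis
qed

section \<open>Conjugation by \<open>\<omega>\<^sub>0\<close> and transpositions beyond \<open>m\<close>\<close>

lemma w0_w0 [simp]: "w0 m (w0 m x) = x"
  unfolding w0_def by auto

lemma w0_bij_betw: "bij_betw (w0 m) {1..m} {1..m}"
proof -
  have "w0 m ` {1..m} \<subseteq> {1..m}" unfolding w0_def by auto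
  moreover have "inj_on (w0 m) {1..m}" by (rule inj_on_inverseI[of _ "w0 m"]) simp
  ultimately show ?thesis by (simp add: bij_betw_def endo_inj_surj)
qed

lemma w0_S_inf: "w0 m \<in> S_inf"
proof -
  have "bij (w0 m)" by (rule o_bij[of "w0 m"]) (auto simp: fun_eq_iff)
  moreover have "{i. w0 m i \<noteq> i} \<subseteq> {1..m}" unfolding w0_def by auto
  then have "finite {i. w0 m i \<noteq> i}" by (rule finite_subset) simp
  ultimately show ?thesis unfolding S_inf_def w0_def by simp
qed

lemma S_mD: "z \<in> S_m m \<Longrightarrow> z \<in> S_inf" "z \<in> S_m m \<Longrightarrow> \<forall>x>m. z x = x"
  unfolding S_m_def by auto

lemma w0_conj_S_m: "z \<in> S_m m \<Longrightarrow> w0 m \<circ> z \<circ> w0 m \<in> S_m m"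
  unfolding S_m_def using S_inf_comp w0_S_inf by (auto simp: w0_def)

lemma transpose_comp_S_m: "0 < a \<Longrightarrow> a < b \<Longrightarrow> b \<le> m \<Longrightarrow> z \<in> S_m m \<Longrightarrow> transpose a b \<circ> z \<in> S_m m"
  unfolding S_m_def using S_inf_comp[OF S_inf_transpose] by (auto simp: transpose_def)

lemma w0_conj_transpose: "w0 m \<circ> transpose a b \<circ> w0 m = transpose (w0 m b) (w0 m a)"
  by (auto simp: fun_eq_iff transpose_def)

lemma ell_term_w0_conj:
  assumes z: "z \<in> S_m m" and xy: "x \<in> {1..m}" "y \<in> {1..m}"
  shows "ell_term (w0 m \<circ> z \<circ> w0 m) (w0 m y) (w0 m x) = ell_term z x y"
proof -
  have zin: "z v \<in> {1..m}" if "v \<in> {1..m}" for v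
    using bij_betwE[OF S_inf_bij_betw_atLeastAtMost[OF S_mD[OF z]]] that by blast
  have w0: "int (w0 m v) = int m + 1 - int v" if "v \<in> {1..m}" for v
    using that unfolding w0_def by auto
  have drift: "drift (w0 m \<circ> z \<circ> w0 m) (w0 m v) = - drift z v" if "v \<in> {1..m}" for v
    unfolding drift_def using w0[OF that] w0[OF zin[OF that]] by (simp add: sgn_if)
  have "w0 m y < w0 m x \<longleftrightarrow> x < y" "w0 m (z x) < w0 m (z y) \<longleftrightarrow> z y < z x"
    using w0[OF xy(1)] w0[OF xy(2)] w0[OF zin[OF xy(1)]] w0[OF zin[OF xy(2)]] by linarith+
  then show ?thesis
    unfolding ell_term_def drift[OF xy(1)] drift[OF xy(2)] by simp
qed

lemma ell_sum_w0_conj: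
  assumes z: "z \<in> S_m m"
  shows "ell_sum (w0 m \<circ> z \<circ> w0 m) = ell_sum z"
proof -
  have z': "w0 m \<circ> z \<circ> w0 m \<in> S_inf" "\<forall>x>m. (w0 m \<circ> z \<circ> w0 m) x = x"
    using S_mD[OF w0_conj_S_m[OF z]] by auto
  have "ell_sum (w0 m \<circ> z \<circ> w0 m)
      = (\<Sum>x\<in>{1..m}. \<Sum>y\<in>{1..m}. ell_term (w0 m \<circ> z \<circ> w0 m) (w0 m x) (w0 m y))"
    unfolding ell_sum_eq_sum_atLeastAtMost[OF z'] by (rule sum_sum_reindex_bij_betw[OF w0_bij_betw])
  also have "\<dots> = (\<Sum>y\<in>{1..m}. \<Sum>x\<in>{1..m}. ell_term z y x)"
    using ell_term_w0_conj[OF z] by (subst sum.swap) (intro sum.cong refl; simp)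
  also have "\<dots> = ell_sum z"
    using ell_sum_eq_sum_atLeastAtMost[OF S_mD[OF z]] by simp
  finally show ?thesis .
qed

text \<open>Only the pairs meeting \<open>{inv z a, b}\<close> are affected by the transposition; the pair
  \<open>(inv z a, b)\<close> becomes an inversion contributing \<open>1\<close>, and no other contribution decreases.\<close>

context
  fixes z :: "nat \<Rightarrow> nat" and m a b :: nat
  assumes z: "z \<in> S_m m" and ab: "0 < a" "a < b" "m < b"
begin

private lemma transpose_outside_values:
  defines "p \<equiv> inv z a" and "e \<equiv> transpose a b \<circ> z"
  shows "z b = b" "z p = a" "p \<in> {1..b}" "p < b" "e p = b" "e b = a"
    "\<And>c. c \<noteq> p \<Longrightarrow> c \<noteq> b \<Longrightarrow> e c = z c"
    "\<And>c. c \<in> {1..b} - {p, b} \<Longrightarrow> z c \<in> {1..<b} - {a}"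
proof -
  have zS: "z \<in> S_inf" and zb: "\<forall>i>b. z i = i" using S_mD[OF z] ab by auto
  have inj: "\<And>x y. z x = z y \<longleftrightarrow> x = y" using S_inf_inj_iff[OF zS] .
  have bij: "bij_betw z {1..b} {1..b}" by (rule S_inf_bij_betw_atLeastAtMost[OF zS zb])
  show "z b = b" using S_mD(2)[OF z] ab by simp
  show zp: "z p = a" unfolding p_def using S_inf_inv_cancel[OF zS] by simp
  have "a \<in> z ` {1..b}" using bij ab unfolding bij_betw_def by auto
  then show "p \<in> {1..b}" using zp inj by auto
  then show "p < b" using zp \<open>z b = b\<close> ab by (cases "p = b") auto
  show "e p = b" "e b = a" unfolding e_def using zp \<open>z b = b\<close> by auto
  show "e c = z c" if "c \<noteq> p" "c \<noteq> b" for c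
    using that zp \<open>z b = b\<close> inj[of c p] inj[of c b] unfolding e_def by (auto simp: transpose_def)
  show "z c \<in> {1..<b} - {a}" if "c \<in> {1..b} - {p, b}" for c
    using that bij_betwE[OF bij] zp \<open>z b = b\<close> inj[of c p] inj[of c b] by fastforce
qed

private lemma ell_term_cross_transpose_outside:
  defines "p \<equiv> inv z a" and "e \<equiv> transpose a b \<circ> z"
  assumes c: "c \<in> {1..b} - {p, b}"
  shows "ell_term z p c + ell_term z c p + ell_term z b c + ell_term z c b
      \<le> ell_term e p c + ell_term e c p + ell_term e b c + ell_term e c b"
proof -
  note facts = transpose_outside_values[folded p_def e_def]
  have c: "c \<noteq> p" "c < b" "z c < b" "z c \<noteq> a" "e c = z c"
    using c facts(8)[of c] facts(7)[of c] by auto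
  define \<epsilon> where "\<epsilon> = drift z c"
  define \<sigma> where "\<sigma> = sgn (int a - int p)"
  have "ell_term e p c = (if p < c then - \<epsilon> else 0)" "ell_term e c b = (if a < z c then \<epsilon> else 0)"
    "ell_term e c p = 0" "ell_term e b c = 0"
    using c facts(4,5,6) ab unfolding ell_term_def \<epsilon>_def by (auto simp: drift_def)
  moreover have "ell_term z p c = (if p < c \<and> z c < a then - (\<sigma> * \<epsilon>) else 0)"
    "ell_term z c p = (if c < p \<and> a < z c then - (\<epsilon> * \<sigma>) else 0)"
    "ell_term z c b = 0" "ell_term z b c = 0"
    using c facts(1,2) unfolding ell_term_def \<epsilon>_def \<sigma>_def by (auto simp: drift_def)
  moreover have "\<epsilon> \<in> {-1, 0, 1}" "\<sigma> \<in> {-1, 0, 1}"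
    unfolding \<epsilon>_def \<sigma>_def drift_def by (auto simp: sgn_if)
  moreover have "\<sigma> = 1" if "p < c" "z c < a" "\<epsilon> = 1"
    using that unfolding \<epsilon>_def \<sigma>_def drift_def by (auto simp: sgn_if split: if_splits)
  moreover have "\<sigma> = -1" if "c < p" "a < z c" "\<epsilon> = -1"
    using that unfolding \<epsilon>_def \<sigma>_def drift_def by (auto simp: sgn_if split: if_splits)
  ultimately show ?thesis
    using c by (cases "p < c"; cases "a < z c") (auto simp: nat_neq_iff)
qed

lemma ell_sum_transpose_outside: "ell_sum z < ell_sum (transpose a b \<circ> z)"
proof -
  define p where "p = inv z a"
  define e where "e = transpose a b \<circ> z"
  note facts = transpose_outside_values[folded p_def e_def]
  define S where "S = {1..b} - {p, b}"
  have zS: "z \<in> S_inf" and zb: "\<forall>i>b. z i = i" using S_mD[OF z] ab by auto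
  have eS: "e \<in> S_inf" unfolding e_def using ab by (intro S_inf_comp S_inf_transpose zS) auto
  have eb: "\<forall>i>b. e i = i" unfolding e_def using zb ab by (auto simp: transpose_def)
  have A: "finite {1..b}" "p \<in> {1..b}" "b \<in> {1..b}" "p \<noteq> b" using facts ab by auto
  have inner: "(\<Sum>x\<in>S. \<Sum>y\<in>S. ell_term e x y) = (\<Sum>x\<in>S. \<Sum>y\<in>S. ell_term z x y)"
    using facts(7) unfolding S_def ell_term_def drift_def by (intro sum.cong refl) auto
  have cross: "(\<Sum>c\<in>S. ell_term z p c + ell_term z c p + ell_term z b c + ell_term z c b)
      \<le> (\<Sum>c\<in>S. ell_term e p c + ell_term e c p + ell_term e b c + ell_term e c b)"
    unfolding S_def p_def e_def by (rule sum_mono) (rule ell_term_cross_transpose_outside)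
  have diag: "ell_term e p p + ell_term e p b + ell_term e b p + ell_term e b b
      = ell_term z p p + ell_term z p b + ell_term z b p + ell_term z b b + 1"
    using facts(1,2,4,5,6) ab unfolding ell_term_def drift_def by auto
  have "ell_sum z = (\<Sum>x\<in>S. \<Sum>y\<in>S. ell_term z x y) + (\<Sum>c\<in>S. ell_term z p c + ell_term z c p
      + ell_term z b c + ell_term z c b) + ell_term z p p + ell_term z p b + ell_term z b p + ell_term z b b"
    unfolding ell_sum_eq_sum_atLeastAtMost[OF zS zb] sum_sum_split_two[OF A] S_def ..
  also have "\<dots> < (\<Sum>x\<in>S. \<Sum>y\<in>S. ell_term e x y) + (\<Sum>c\<in>S. ell_term e p c + ell_term e c p
      + ell_term e b c + ell_term e c b) + ell_term e p p + ell_term e p b + ell_term e b p + ell_term e b b"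
    using cross diag inner by linarith
  also have "\<dots> = ell_sum e"
    unfolding ell_sum_eq_sum_atLeastAtMost[OF eS eb] sum_sum_split_two[OF A] S_def ..
  finally show ?thesis unfolding e_def .
qed

end

corollary ell_u_transpose_comp_bounded:
  assumes z: "z \<in> S_m m" and ab: "0 < a" "a < b"
    and ell: "ell_u z = ell_u (transpose a b \<circ> z) + 1"
  shows "b \<le> m"
proof (rule ccontr)
  assume "\<not> b \<le> m"
  then have "ell_sum z < ell_sum (transpose a b \<circ> z)"
    using ell_sum_transpose_outside[OF z ab] by simp
  moreover have "transpose a b \<circ> z \<in> S_inf"
    using ab by (intro S_inf_comp S_inf_transpose S_mD(1)[OF z]) auto
  ultimately show False
    using ell ell_u_eq_ell_sum[OF S_mD(1)[OF z]] ell_u_eq_ell_sum by simp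
qed

corollary ell_u_w0_conj:
  assumes z: "z \<in> S_m m"
  shows "ell_u (w0 m \<circ> z \<circ> w0 m) = ell_u z"
  using ell_u_eq_ell_sum[OF S_mD(1)[OF w0_conj_S_m[OF z]]] ell_sum_w0_conj[OF z]
    ell_u_eq_ell_sum[OF S_mD(1)[OF z]] by simp

section \<open>Chains of the operators \<open>uhat\<close>\<close>

definition transp_prod :: "(nat \<times> nat) list \<Rightarrow> nat \<Rightarrow> nat" where
  "transp_prod xs = foldr (\<lambda>(a, b) f. transpose a b \<circ> f) xs id"

lemma transp_prod_simps [simp]:
  "transp_prod [] = id" "transp_prod ((a, b) # xs) = transpose a b \<circ> transp_prod xs"
  unfolding transp_prod_def by auto

fun ell_chain :: "(nat \<times> nat) list \<Rightarrow> bool" where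
  "ell_chain [] = True"
| "ell_chain ((a, b) # xs) \<longleftrightarrow> ell_chain xs \<and> transpose a b \<circ> transp_prod xs \<in> S_inf \<and>
     ell_u (transpose a b \<circ> transp_prod xs) = ell_u (transp_prod xs) + 1"

lemma uhat_basis:
  "uhat a b (basis v) = (if transpose a b \<circ> v \<in> S_inf \<and> ell_u (transpose a b \<circ> v) = ell_u v + 1
      then basis (transpose a b \<circ> v) else (\<lambda>_. 0))"
proof
  fix w
  have tt: "transpose a b \<circ> (transpose a b \<circ> f) = f" for f
    by (simp flip: comp_assoc)
  show "uhat a b (basis v) w = (if transpose a b \<circ> v \<in> S_inf \<and> ell_u (transpose a b \<circ> v) = ell_u v + 1
      then basis (transpose a b \<circ> v) else (\<lambda>_. 0)) w"
  proof (cases "w = transpose a b \<circ> v")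
    case True
    then show ?thesis unfolding uhat_def basis_def by (simp add: tt)
  next
    case False
    then have "transpose a b \<circ> w \<noteq> v" using tt by metis
    then show ?thesis unfolding uhat_def basis_def using False by simp
  qed
qed

lemma foldr_uhat_basis_id:
  "foldr (\<lambda>(a, b) f. uhat a b f) xs (basis id) = (if ell_chain xs then basis (transp_prod xs) else (\<lambda>_. 0))"
proof (induction xs)
  case Nil
  then show ?case by (simp add: id_def)
next
  case (Cons x xs)
  moreover have "uhat a b (\<lambda>_. 0) = (\<lambda>_. 0)" for a b unfolding uhat_def by auto
  ultimately show ?case by (cases x) (auto simp: uhat_basis comp_def)
qed

lemma basis_eq_iff: "basis v = basis v' \<longleftrightarrow> v = v'"
proof
  assume "basis v = basis v'"
  then have "basis v v = basis v' v" by simp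
  then show "v = v'" unfolding basis_def by (simp split: if_splits)
qed simp

lemma basis_neq_zero: "basis v \<noteq> (\<lambda>_. 0)"
proof
  assume "basis v = (\<lambda>_. 0)"
  then have "basis v v = 0" by simp
  then show False unfolding basis_def by simp
qed

lemma R_u_iff:
  "xs \<in> R_u z \<longleftrightarrow> (\<forall>(a, b)\<in>set xs. 0 < a \<and> a < b) \<and> ell_chain xs \<and> transp_prod xs = z"
  unfolding R_u_def foldr_uhat_basis_id using basis_eq_iff basis_neq_zero by (auto simp: eq_commute)

lemma map_w0_pairs_R_u:
  assumes "z \<in> S_m m" "xs \<in> R_u z"
  shows "map (\<lambda>(a, b). (w0 m b, w0 m a)) xs \<in> R_u (w0 m \<circ> z \<circ> w0 m)"
  using assms unfolding R_u_iff
proof (induction xs arbitrary: z)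
  case Nil
  then show ?case by (auto simp: fun_eq_iff)
next
  case (Cons x xs)
  obtain a b where x: "x = (a, b)" by (cases x)
  define P where "P = transp_prod xs"
  have z: "z \<in> S_m m" and ab: "0 < a" "a < b" and valid: "\<forall>(a, b)\<in>set xs. 0 < a \<and> a < b"
    and chain: "ell_chain xs" and zP: "transpose a b \<circ> P = z"
    and ell: "ell_u (transpose a b \<circ> P) = ell_u P + 1"
    using Cons.prems unfolding x P_def by (auto simp: comp_def)
  have Pz: "P = transpose a b \<circ> z" unfolding zP[symmetric] by (simp flip: comp_assoc)
  have ell: "ell_u z = ell_u P + 1" using ell unfolding zP .
  have "b \<le> m" using ell_u_transpose_comp_bounded[OF z ab] ell unfolding Pz by simp
  then have P: "P \<in> S_m m" unfolding Pz by (rule transpose_comp_S_m[OF ab _ z])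
  have IH: "(\<forall>(a, b)\<in>set (map (\<lambda>(a, b). (w0 m b, w0 m a)) xs). 0 < a \<and> a < b)
      \<and> ell_chain (map (\<lambda>(a, b). (w0 m b, w0 m a)) xs)
      \<and> transp_prod (map (\<lambda>(a, b). (w0 m b, w0 m a)) xs) = w0 m \<circ> P \<circ> w0 m"
    using Cons.IH[OF P] valid chain P_def by blast
  have "0 < w0 m b" "w0 m b < w0 m a" using ab \<open>b \<le> m\<close> unfolding w0_def by auto
  moreover have "transpose (w0 m b) (w0 m a) \<circ> (w0 m \<circ> P \<circ> w0 m) = w0 m \<circ> z \<circ> w0 m"
    unfolding w0_conj_transpose[symmetric] zP[symmetric] by (auto simp: fun_eq_iff)
  moreover have "ell_u (w0 m \<circ> z \<circ> w0 m) = ell_u (w0 m \<circ> P \<circ> w0 m) + 1"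
    using ell ell_u_w0_conj[OF z] ell_u_w0_conj[OF P] by simp
  ultimately show ?case
    using IH S_mD(1)[OF w0_conj_S_m[OF z]] unfolding x by simp
qed

theorem mainTheorem6:
  fixes m :: nat and \<zeta> :: "nat \<Rightarrow> nat"
  assumes "1 \<le> m" and "\<zeta> \<in> S_m m"
  shows "bij_betw (map (\<lambda>(a, b). (w0 m b, w0 m a)))
           (R_u \<zeta>) (R_u (w0 m \<circ> \<zeta> \<circ> w0 m))"
proof -
  let ?f = "map (\<lambda>(a, b). (w0 m b, w0 m a))"
  have "?f (?f xs) = xs" for xs
    by (induction xs) auto
  moreover have "?f ` R_u \<zeta> \<subseteq> R_u (w0 m \<circ> \<zeta> \<circ> w0 m)"
    using map_w0_pairs_R_u[OF assms(2)] by blast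
  moreover have "w0 m \<circ> (w0 m \<circ> \<zeta> \<circ> w0 m) \<circ> w0 m = \<zeta>" by (auto simp: fun_eq_iff)
  then have "?f ` R_u (w0 m \<circ> \<zeta> \<circ> w0 m) \<subseteq> R_u \<zeta>"
    using map_w0_pairs_R_u[OF w0_conj_S_m[OF assms(2)]] by auto
  ultimately show ?thesis
    by (intro bij_betw_byWitness[where f' = ?f]) auto
qed

end
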